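(* Let $\gamma\in[0,1)$ and $\Omega_{\gamma}=\{z\in\mathbb{C}:|z+\frac{\gamma}{1-\gamma}|<\frac{1}{1-\gamma}\}$. Let $f$ be analytic in $\Omega_\gamma$ with $|f(z)|\le1$ on $\Omega_\gamma$ and $f(z)=\sum_{n=0}^\infty a_n\left(z+\frac{\gamma}{1-\gamma}\right)^n$ in $\Omega_\gamma$. Then $$\sum_{n=0}^\infty \frac{|a_n|}{(1-\gamma)^n}\rho^n+\left(\frac{1}{1+|a_0|}+\frac{\rho}{1-\rho}\right)\sum_{n=1}^\infty\frac{|a_n|^2}{(1-\gamma)^{2n}}\rho^{2n}\le 1$$ for $|(1-\gamma)z+\gamma|=\rho\le\rho_0=1/3$. The number $\rho_0=1/3$ is best possible, i.e. for every $\rho\in(1/3,1)$ there is such a function $f$ for which the left-hand side exceeds $1$.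
   Context: $\Omega_\gamma$ is the open disk centered at $-\gamma/(1-\gamma)$ of radius $1/(1-\gamma)$. *)

theory Defs
  imports "HOL-Complex_Analysis.Complex_Analysis"
begin

definition Omega :: "real \<Rightarrow> complex set" where
  "Omega \<gamma> = ball (complex_of_real (- \<gamma> / (1 - \<gamma>))) (1 / (1 - \<gamma>))"

definition S1 :: "real \<Rightarrow> (nat \<Rightarrow> complex) \<Rightarrow> real \<Rightarrow> nat \<Rightarrow> real" where
  "S1 \<gamma> a \<rho> n = norm (a n) / (1 - \<gamma>) ^ n * \<rho> ^ n"

definition S2 :: "real \<Rightarrow> (nat \<Rightarrow> complex) \<Rightarrow> real \<Rightarrow> nat \<Rightarrow> real" where
  "S2 \<gamma> a \<rho> n = (norm (a (n + 1)))\<^sup>2 / (1 - \<gamma>) ^ (2 * (n + 1)) * \<rho> ^ (2 * (n + 1))"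

definition bohr_lhs :: "real \<Rightarrow> (nat \<Rightarrow> complex) \<Rightarrow> real \<Rightarrow> real" where
  "bohr_lhs \<gamma> a \<rho> = (\<Sum>n. S1 \<gamma> a \<rho> n)
      + (1 / (1 + norm (a 0)) + \<rho> / (1 - \<rho>)) * (\<Sum>n. S2 \<gamma> a \<rho> n)"

definition admissible :: "real \<Rightarrow> (complex \<Rightarrow> complex) \<Rightarrow> (nat \<Rightarrow> complex) \<Rightarrow> bool" where
  "admissible \<gamma> f a \<longleftrightarrow> f holomorphic_on Omega \<gamma>
     \<and> (\<forall>z\<in>Omega \<gamma>. norm (f z) \<le> 1)
     \<and> (\<forall>z\<in>Omega \<gamma>. (\<lambda>n. a n * (z + complex_of_real (\<gamma> / (1 - \<gamma>))) ^ n) sums f z)"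

end

theory Submission
  imports Defs
begin

(* The substitution w = (1 - gamma) z + gamma maps Omega_gamma onto the unit disk and turns the
   expansion about -gamma/(1-gamma) into a Taylor series sum b_n w^n with b_n = a_n/(1-gamma)^n,
   so everything reduces to gamma = 0. For a function bounded by 1 on the unit disk, Schwarz-Pick
   at 0, applied to the average of the function over the rotations by k-th roots of unity, gives
   Wiener's inequality |b_k| <= 1 - |b_0|^2 for k >= 1. Bounding all coefficients this way reduces
   the claim to an elementary inequality in |b_0| and rho <= 1/3. For rho > 1/3 the disk
   automorphism (alpha - w)/(1 - alpha w) with alpha close enough to 1 already has
   sum |b_n| rho^n > 1. *)

lemma Schwarz_Pick_deriv_0:
  assumes holh: "h holomorphic_on ball 0 1" and lt1: "\<And>z. norm z < 1 \<Longrightarrow> norm (h z) < 1"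
  shows "norm (deriv h 0) \<le> 1 - norm (h 0) ^ 2"
proof -
  define c where "c = h 0"
  have c1: "norm c < 1" using lt1[of 0] by (simp add: c_def)
  have pos: "1 - norm c ^ 2 > 0" using c1 by (simp add: power_less_one_iff abs_square_less_1)
  have cnj_c: "cnj c * c = of_real (norm c ^ 2)"
    by (metis complex_norm_square mult.commute)
  define \<phi> where "\<phi> = Moebius_function 0 c \<circ> h"
  have "\<phi> holomorphic_on ball 0 1"
    unfolding \<phi>_def
    by (rule holomorphic_on_compose_gen[OF holh Moebius_function_holomorphic[OF c1]]) (use lt1 in auto)
  moreover have "\<phi> 0 = 0" by (simp add: \<phi>_def c_def Moebius_function_eq_zero)
  moreover have "norm (\<phi> z) < 1" if "norm z < 1" for z
    unfolding \<phi>_def o_def using Moebius_function_norm_lt_1[OF c1 lt1[OF that]] .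
  ultimately have Schwarz: "norm (deriv \<phi> 0) \<le> 1"
    using Schwarz_Lemma(2)[of \<phi> 0] by auto
  have nz: "1 - cnj c * c \<noteq> 0"
    unfolding cnj_c using pos by (metis of_real_1 of_real_diff of_real_eq_0_iff less_irrefl)
  have "((\<lambda>z. (z - c) / (1 - cnj c * z)) has_field_derivative
          ((1 - cnj c * c) + cnj c * (c - c)) / (1 - cnj c * c)\<^sup>2) (at c)"
    using nz by (auto intro!: derivative_eq_intros simp: power2_eq_square)
  hence "(Moebius_function 0 c has_field_derivative 1 / (1 - cnj c * c)) (at c)"
    using nz by (simp add: Moebius_function_simple[abs_def] power2_eq_square)
  moreover have "(h has_field_derivative deriv h 0) (at 0)"
    by (rule holomorphic_derivI[OF holh]) auto
  ultimately have "(\<phi> has_field_derivative deriv h 0 / (1 - cnj c * c)) (at 0)"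
    unfolding \<phi>_def c_def using DERIV_chain by fastforce
  moreover have "norm (1 - cnj c * c) = 1 - norm c ^ 2"
    using pos by (metis cnj_c norm_of_real of_real_1 of_real_diff abs_of_pos)
  ultimately have "norm (deriv \<phi> 0) = norm (deriv h 0) / (1 - norm c ^ 2)"
    by (simp add: DERIV_imp_deriv norm_divide)
  thus ?thesis using Schwarz pos by (simp add: c_def divide_le_eq)
qed

lemma Schwarz_Pick_deriv_0_le:
  assumes holh: "h holomorphic_on ball 0 1" and le1: "\<And>z. norm z < 1 \<Longrightarrow> norm (h z) \<le> 1"
  shows "norm (deriv h 0) \<le> 1 - norm (h 0) ^ 2"
proof -
  have scaled: "t * norm (deriv h 0) + t\<^sup>2 * norm (h 0) ^ 2 \<le> 1" if t: "0 < t" "t < 1" for t :: real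
  proof -
    have "(h has_field_derivative deriv h 0) (at 0)"
      by (rule holomorphic_derivI[OF holh]) auto
    hence deriv_th: "deriv (\<lambda>z. of_real t * h z) 0 = of_real t * deriv h 0"
      by (intro DERIV_imp_deriv DERIV_cmult)
    have th_lt1: "norm (of_real t * h z) < 1" if "norm z < 1" for z
    proof -
      have "norm (of_real t * h z) = t * norm (h z)" using t by (simp add: norm_mult)
      also have "\<dots> \<le> t * 1" using t le1[OF that] by (intro mult_left_mono) auto
      finally show ?thesis using t by simp
    qed
    have "norm (of_real t * deriv h 0) \<le> 1 - norm (of_real t * h 0) ^ 2"
      using Schwarz_Pick_deriv_0[OF holomorphic_on_mult[OF holomorphic_on_const holh] th_lt1]
      by (simp only: deriv_th)
    thus ?thesis using t by (simp add: norm_mult power_mult_distrib)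
  qed
  have "((\<lambda>t::real. t * norm (deriv h 0) + t\<^sup>2 * norm (h 0) ^ 2)
          \<longlongrightarrow> 1 * norm (deriv h 0) + 1\<^sup>2 * norm (h 0) ^ 2) (at_left 1)"
    by (intro tendsto_intros)
  moreover have "eventually (\<lambda>t::real. t * norm (deriv h 0) + t\<^sup>2 * norm (h 0) ^ 2 \<le> 1) (at_left 1)"
    using eventually_at_left_real[of 0 "1::real"] by (rule eventually_mono) (use scaled in auto)
  ultimately have "1 * norm (deriv h 0) + 1\<^sup>2 * norm (h 0) ^ 2 \<le> 1"
    by (intro tendsto_upperbound) auto
  thus ?thesis by simp
qed

definition schur_coeffs :: "(nat \<Rightarrow> complex) \<Rightarrow> bool" where
  "schur_coeffs c \<longleftrightarrow>
     (\<forall>w. norm w < 1 \<longrightarrow> summable (\<lambda>n. c n * w ^ n) \<and> norm (\<Sum>n. c n * w ^ n) \<le> 1)"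

lemma schur_coeffsI:
  assumes "\<And>w. norm w < 1 \<Longrightarrow> \<exists>s. (\<lambda>n. c n * w ^ n) sums s \<and> norm s \<le> 1"
  shows "schur_coeffs c"
  using assms unfolding schur_coeffs_def by (metis sums_iff)

lemma schur_coeffs_norm_0_le:
  assumes "schur_coeffs c"
  shows "norm (c 0) \<le> 1"
  using assms by (auto simp: schur_coeffs_def dest: spec[of _ 0])

lemma schur_coeffs_coeff_1_le:
  assumes "schur_coeffs c"
  shows "norm (c 1) \<le> 1 - norm (c 0) ^ 2"
proof -
  define F where "F = Abs_fps c"
  have radius: "fps_conv_radius F \<ge> 1"
    unfolding fps_conv_radius_def F_def
    by (rule conv_radius_geI_ex') (use assms in \<open>auto simp: schur_coeffs_def\<close>)
  have disk: "ball (0::complex) 1 \<subseteq> eball 0 (fps_conv_radius F)"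
  proof
    fix w :: complex assume "w \<in> ball 0 1"
    hence "ereal (dist 0 w) < 1" by (simp add: one_ereal_def)
    hence "ereal (dist 0 w) < fps_conv_radius F" using radius by (rule order_less_le_trans)
    thus "w \<in> eball 0 (fps_conv_radius F)" by (simp only: in_eball_iff)
  qed
  have "norm (deriv (eval_fps F) 0) \<le> 1 - norm (eval_fps F 0) ^ 2"
  proof (rule Schwarz_Pick_deriv_0_le)
    show "eval_fps F holomorphic_on ball 0 1" by (rule holomorphic_on_eval_fps[OF disk])
    show "norm (eval_fps F w) \<le> 1" if "norm w < 1" for w
      using assms that by (simp add: schur_coeffs_def eval_fps_def F_def)
  qed
  moreover have "deriv (eval_fps F) 0 = c 1"
    using has_field_derivative_eval_fps[of 0 F UNIV] subsetD[OF disk, of 0]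
    by (auto simp: F_def eval_fps_at_0 intro!: DERIV_imp_deriv)
  ultimately show ?thesis by (simp add: F_def eval_fps_at_0)
qed

lemma sum_root_unity_powers:
  assumes "k \<ge> 1"
  defines "\<omega> \<equiv> exp (2 * of_real pi * \<i> / of_nat k)"
  shows "(\<Sum>j<k. (\<omega> ^ j) ^ n) = (if k dvd n then of_nat k else 0)"
proof -
  have \<omega>_pow: "\<omega> ^ n = exp (2 * of_real pi * \<i> * of_nat n / of_nat k)" for n
    unfolding \<omega>_def by (simp add: exp_of_nat_mult[symmetric] algebra_simps)
  have "\<omega> ^ n = 1 \<longleftrightarrow> k dvd n"
    using complex_root_unity_eq_1[OF assms(1)] by (simp add: \<omega>_pow)
  moreover have "(\<omega> ^ n) ^ k = 1"
    using complex_root_unity[of k n] assms(1) by (simp add: \<omega>_pow)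
  ultimately have "(\<Sum>j<k. (\<omega> ^ n) ^ j) = (if k dvd n then of_nat k else 0)"
    by (simp add: sum_gp_strict)
  thus ?thesis
    by (simp add: mult.commute flip: power_mult)
qed

lemma ex_complex_root:
  assumes "k > 0"
  shows "\<exists>z::complex. z ^ k = w \<and> norm z = root k (norm w)"
proof
  let ?z = "rcis (root k (norm w)) (Arg w / k)"
  have "?z ^ k = rcis (norm w) (Arg w)"
    using assms by (simp add: DeMoivre2)
  thus "?z ^ k = w \<and> norm ?z = root k (norm w)"
    by (simp add: rcis_cmod_Arg real_root_ge_zero)
qed

lemma schur_coeffs_root_unity_average:
  assumes c: "schur_coeffs c" and k: "k \<ge> 1" and z: "norm z < 1"
  shows "\<exists>s. (\<lambda>n. if k dvd n then c n * z ^ n else 0) sums s \<and> norm s \<le> 1"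
proof -
  define \<omega> where "\<omega> = exp (2 * of_real pi * \<i> / of_nat k)"
  have "norm \<omega> = 1" by (simp add: \<omega>_def norm_exp_eq_Re)
  hence in_disk: "norm (\<omega> ^ j * z) < 1" for j
    using z by (simp add: norm_mult norm_power)
  define s where "s = (\<Sum>j<k. \<Sum>n. c n * (\<omega> ^ j * z) ^ n) / of_nat k"
  have "(\<lambda>n. (\<Sum>j<k. c n * (\<omega> ^ j * z) ^ n) / of_nat k) sums s"
    unfolding s_def using c in_disk
    by (intro sums_divide sums_sum) (auto simp: schur_coeffs_def)
  moreover have "(\<Sum>j<k. c n * (\<omega> ^ j * z) ^ n) / of_nat k = (if k dvd n then c n * z ^ n else 0)"
    for n
  proof -
    have "(\<Sum>j<k. c n * (\<omega> ^ j * z) ^ n) = c n * z ^ n * (\<Sum>j<k. (\<omega> ^ j) ^ n)"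
      by (simp add: sum_distrib_left power_mult_distrib mult_ac)
    also have "\<dots> = c n * z ^ n * (if k dvd n then of_nat k else 0)"
      using sum_root_unity_powers[OF k, of n] by (simp add: \<omega>_def)
    finally show ?thesis using k by simp
  qed
  moreover have "norm s \<le> 1"
  proof -
    have "norm (\<Sum>j<k. \<Sum>n. c n * (\<omega> ^ j * z) ^ n) \<le> (\<Sum>j<k. 1)"
      using c in_disk by (intro order.trans[OF norm_sum] sum_mono) (auto simp: schur_coeffs_def)
    thus ?thesis using k by (simp add: s_def norm_divide divide_le_eq)
  qed
  ultimately show ?thesis by auto
qed

lemma schur_coeffs_decimate:
  assumes c: "schur_coeffs c" and k: "k \<ge> 1"
  shows "schur_coeffs (\<lambda>n. c (n * k))"
proof (rule schur_coeffsI)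
  fix w :: complex assume w: "norm w < 1"
  obtain z where zk: "z ^ k = w" and zn: "norm z = root k (norm w)"
    using ex_complex_root[of k w] k by auto
  have "norm z < 1" using w k by (simp add: zn)
  then obtain s where "(\<lambda>n. if k dvd n then c n * z ^ n else 0) sums s" and s: "norm s \<le> 1"
    using schur_coeffs_root_unity_average[OF c k] by blast
  moreover have "strict_mono (\<lambda>n. n * k)" using k by (auto intro: strict_monoI)
  ultimately have "(\<lambda>n. if k dvd n * k then c (n * k) * z ^ (n * k) else 0) sums s"
    by (subst sums_mono_reindex[where f = "\<lambda>n. if k dvd n then c n * z ^ n else 0"])
       (auto simp: mult.commute elim!: dvdE)
  moreover have "z ^ (n * k) = w ^ n" for n
    by (simp add: mult.commute[of n k] power_mult flip: zk)
  ultimately show "\<exists>s. (\<lambda>n. c (n * k) * w ^ n) sums s \<and> norm s \<le> 1"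
    using s by auto
qed

lemma Wiener_inequality:
  assumes "schur_coeffs c" and "k \<ge> 1"
  shows "norm (c k) \<le> 1 - norm (c 0) ^ 2"
  using schur_coeffs_coeff_1_le[OF schur_coeffs_decimate[OF assms]] by simp

lemma schur_coeffs_S1_bound:
  assumes b: "schur_coeffs b" and \<rho>: "0 \<le> \<rho>" "\<rho> < 1"
  shows "summable (S1 0 b \<rho>)"
    and "(\<Sum>n. S1 0 b \<rho> n) \<le> norm (b 0) + (1 - norm (b 0) ^ 2) * (\<rho> / (1 - \<rho>))"
proof -
  let ?s = "1 - norm (b 0) ^ 2"
  have geometric: "(\<lambda>n. ?s * \<rho> ^ Suc n) sums (?s * (\<rho> / (1 - \<rho>)))"
    using sums_mult[OF geometric_sums[of \<rho>], of "?s * \<rho>"] \<rho> by (simp add: field_simps)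
  have le: "S1 0 b \<rho> (Suc n) \<le> ?s * \<rho> ^ Suc n" for n
    using Wiener_inequality[OF b, of "Suc n"] \<rho> by (simp add: S1_def mult_right_mono)
  have tail: "summable (\<lambda>n. S1 0 b \<rho> (Suc n))"
    using le \<rho> by (intro summable_comparison_test'[OF sums_summable[OF geometric]]) (auto simp: S1_def)
  thus "summable (S1 0 b \<rho>)" by (simp only: summable_Suc_iff)
  have "(\<Sum>n. S1 0 b \<rho> n) = (\<Sum>n. S1 0 b \<rho> (Suc n)) + norm (b 0)"
    using suminf_split_head[OF \<open>summable (S1 0 b \<rho>)\<close>] by (simp add: S1_def[of 0 b \<rho> 0])
  also have "(\<Sum>n. S1 0 b \<rho> (Suc n)) \<le> ?s * (\<rho> / (1 - \<rho>))"
    using le tail geometric by (intro sums_le[OF _ summable_sums]) auto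
  finally show "(\<Sum>n. S1 0 b \<rho> n) \<le> norm (b 0) + ?s * (\<rho> / (1 - \<rho>))" by simp
qed

lemma schur_coeffs_S2_bound:
  assumes b: "schur_coeffs b" and \<rho>: "0 \<le> \<rho>" "\<rho> < 1"
  shows "summable (S2 0 b \<rho>)"
    and "(\<Sum>n. S2 0 b \<rho> n) \<le> (1 - norm (b 0) ^ 2)\<^sup>2 * (\<rho>\<^sup>2 / (1 - \<rho>\<^sup>2))"
proof -
  let ?s = "1 - norm (b 0) ^ 2"
  have \<rho>2: "\<rho>\<^sup>2 < 1" using \<rho> by (simp add: power_less_one_iff abs_square_less_1)
  have geometric: "(\<lambda>n. ?s ^ 2 * (\<rho>\<^sup>2) ^ Suc n) sums (?s ^ 2 * (\<rho>\<^sup>2 / (1 - \<rho>\<^sup>2)))"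
    using sums_mult[OF geometric_sums[of "\<rho>\<^sup>2"], of "?s ^ 2 * \<rho>\<^sup>2"] \<rho>2 by (simp add: field_simps)
  have le: "S2 0 b \<rho> n \<le> ?s ^ 2 * (\<rho>\<^sup>2) ^ Suc n" for n
  proof -
    have "S2 0 b \<rho> n = norm (b (n + 1)) ^ 2 * (\<rho>\<^sup>2) ^ Suc n"
      by (simp add: S2_def power_mult power2_eq_square)
    also have "\<dots> \<le> ?s ^ 2 * (\<rho>\<^sup>2) ^ Suc n"
      using Wiener_inequality[OF b, of "n + 1"] by (intro mult_right_mono power_mono) auto
    finally show ?thesis .
  qed
  have "0 \<le> S2 0 b \<rho> n" for n using \<rho> by (simp add: S2_def)
  thus "summable (S2 0 b \<rho>)"
    using le by (intro summable_comparison_test'[OF sums_summable[OF geometric]]) auto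
  thus "(\<Sum>n. S2 0 b \<rho> n) \<le> ?s ^ 2 * (\<rho>\<^sup>2 / (1 - \<rho>\<^sup>2))"
    using le geometric by (intro sums_le[OF _ summable_sums]) auto
qed

lemma bohr_majorant_le_1:
  fixes A u v :: real
  assumes A: "0 \<le> A" "A \<le> 1" and u: "0 \<le> u" "u \<le> 1/2" and v: "0 \<le> v" "v \<le> 1/8"
  shows "A + (1 - A\<^sup>2) * u + (1 / (1 + A) + u) * ((1 - A\<^sup>2)\<^sup>2 * v) \<le> 1"
proof -
  define s where "s = 1 - A\<^sup>2"
  have s: "0 \<le> s" using A by (simp add: s_def power_le_one)
  have "A + s * u + (1 / (1 + A) + u) * (s\<^sup>2 * v) \<le> A + s * (1/2) + (1 / (1 + A) + 1/2) * (s\<^sup>2 * (1/8))"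
    using A u v s by (intro add_mono mult_left_mono mult_mono) auto
  also have "\<dots> = 1 - (1 - A) ^ 3 * (3/8 - (1 - A) / 16)"
    using A by (simp add: s_def field_simps power2_eq_square power3_eq_cube)
  also have "\<dots> \<le> 1" using A by simp
  finally show ?thesis by (simp add: s_def)
qed

lemma schur_coeffs_bohr_inequality:
  assumes b: "schur_coeffs b" and \<rho>: "0 \<le> \<rho>" "\<rho> \<le> 1/3"
  shows "summable (S1 0 b \<rho>) \<and> summable (S2 0 b \<rho>) \<and> bohr_lhs 0 b \<rho> \<le> 1"
proof -
  let ?A = "norm (b 0)" and ?u = "\<rho> / (1 - \<rho>)" and ?v = "\<rho>\<^sup>2 / (1 - \<rho>\<^sup>2)"
  have \<rho>1: "\<rho> < 1" using \<rho> by simp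
  have u: "0 \<le> ?u" "?u \<le> 1/2" using \<rho> by (auto simp: field_simps)
  have v: "0 \<le> ?v" "?v \<le> 1/8"
  proof -
    have "\<rho>\<^sup>2 \<le> (1/3)\<^sup>2" using \<rho> by (intro power_mono) auto
    thus "0 \<le> ?v" "?v \<le> 1/8" using \<rho> by (auto simp: field_simps)
  qed
  have "bohr_lhs 0 b \<rho> = (\<Sum>n. S1 0 b \<rho> n) + (1 / (1 + ?A) + ?u) * (\<Sum>n. S2 0 b \<rho> n)"
    by (simp add: bohr_lhs_def)
  also have "\<dots> \<le> (?A + (1 - ?A\<^sup>2) * ?u) + (1 / (1 + ?A) + ?u) * ((1 - ?A\<^sup>2)\<^sup>2 * ?v)"
    using schur_coeffs_S1_bound[OF b \<rho>(1) \<rho>1] schur_coeffs_S2_bound[OF b \<rho>(1) \<rho>1] u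
    by (intro add_mono mult_left_mono) auto
  also have "\<dots> \<le> 1"
    using bohr_majorant_le_1[OF _ schur_coeffs_norm_0_le[OF b] u v] by simp
  finally show ?thesis
    using schur_coeffs_S1_bound[OF b \<rho>(1) \<rho>1] schur_coeffs_S2_bound[OF b \<rho>(1) \<rho>1] by simp
qed

lemma norm_divide_of_real_power:
  fixes a :: complex
  assumes "\<gamma> < 1"
  shows "norm (a / of_real ((1 - \<gamma>) ^ n)) = norm a / (1 - \<gamma>) ^ n"
  using assms by (simp only: norm_divide norm_of_real) simp

lemma S1_rescale:
  assumes "\<gamma> < 1"
  shows "S1 \<gamma> a = S1 0 (\<lambda>n. a n / of_real ((1 - \<gamma>) ^ n))"
  using assms by (simp add: fun_eq_iff S1_def norm_divide_of_real_power del: of_real_power of_real_diff)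

lemma S2_rescale:
  assumes "\<gamma> < 1"
  shows "S2 \<gamma> a = S2 0 (\<lambda>n. a n / of_real ((1 - \<gamma>) ^ n))"
proof (intro ext)
  fix \<rho> n
  have "((1 - \<gamma>) ^ (n + 1))\<^sup>2 = (1 - \<gamma>) ^ (2 * (n + 1))" by (metis power_mult mult.commute)
  thus "S2 \<gamma> a \<rho> n = S2 0 (\<lambda>n. a n / of_real ((1 - \<gamma>) ^ n)) \<rho> n"
    unfolding S2_def norm_divide_of_real_power[OF assms] power_divide by simp
qed

lemma bohr_lhs_rescale:
  assumes "\<gamma> < 1"
  shows "bohr_lhs \<gamma> a = bohr_lhs 0 (\<lambda>n. a n / of_real ((1 - \<gamma>) ^ n))"
  unfolding bohr_lhs_def S1_rescale[OF assms] S2_rescale[OF assms] by (simp add: fun_eq_iff)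

lemma affine_eq_scaled_shift:
  assumes "\<gamma> < 1"
  shows "of_real (1 - \<gamma>) * z + of_real \<gamma> = of_real (1 - \<gamma>) * (z + of_real (\<gamma> / (1 - \<gamma>)))"
  using assms by (simp add: distrib_left del: of_real_diff flip: of_real_mult)

lemma mem_Omega_iff:
  assumes "\<gamma> < 1"
  shows "z \<in> Omega \<gamma> \<longleftrightarrow> norm (of_real (1 - \<gamma>) * z + of_real \<gamma>) < 1"
proof -
  have "z \<in> Omega \<gamma> \<longleftrightarrow> norm (z + of_real (\<gamma> / (1 - \<gamma>))) < 1 / (1 - \<gamma>)"
    by (simp add: Omega_def dist_norm norm_minus_commute)
  also have "\<dots> \<longleftrightarrow> (1 - \<gamma>) * norm (z + of_real (\<gamma> / (1 - \<gamma>))) < 1"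
    using assms by (simp add: pos_less_divide_eq mult.commute[of _ "1 - \<gamma>"])
  also have "(1 - \<gamma>) * norm (z + of_real (\<gamma> / (1 - \<gamma>))) = norm (of_real (1 - \<gamma>) * z + of_real \<gamma>)"
    using assms by (simp add: affine_eq_scaled_shift norm_mult del: of_real_diff)
  finally show ?thesis .
qed

lemma admissible_imp_schur_coeffs:
  assumes "\<gamma> < 1" and adm: "admissible \<gamma> f a"
  shows "schur_coeffs (\<lambda>n. a n / of_real ((1 - \<gamma>) ^ n))"
proof (rule schur_coeffsI)
  fix w :: complex assume w: "norm w < 1"
  have nz: "complex_of_real (1 - \<gamma>) \<noteq> 0" using assms(1) by simp
  define z where "z = (w - of_real \<gamma>) / of_real (1 - \<gamma>)"
  have w_affine: "w = of_real (1 - \<gamma>) * z + of_real \<gamma>"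
    using nz by (simp add: z_def del: of_real_diff)
  hence wz: "w = of_real (1 - \<gamma>) * (z + of_real (\<gamma> / (1 - \<gamma>)))"
    by (simp only: affine_eq_scaled_shift[OF assms(1)])
  have "z \<in> Omega \<gamma>"
    unfolding mem_Omega_iff[OF assms(1)] using w by (simp only: flip: w_affine)
  hence "(\<lambda>n. a n * (z + of_real (\<gamma> / (1 - \<gamma>))) ^ n) sums f z" and "norm (f z) \<le> 1"
    using adm by (auto simp: admissible_def)
  moreover have "a n * (z + of_real (\<gamma> / (1 - \<gamma>))) ^ n = a n / of_real ((1 - \<gamma>) ^ n) * w ^ n" for n
    using nz by (simp add: wz power_mult_distrib del: of_real_diff)
  ultimately show "\<exists>s. (\<lambda>n. a n / of_real ((1 - \<gamma>) ^ n) * w ^ n) sums s \<and> norm s \<le> 1"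
    by auto
qed

lemma admissible_compose_affine:
  assumes "\<gamma> < 1" and adm: "admissible 0 g b"
  shows "admissible \<gamma> (\<lambda>z. g (of_real (1 - \<gamma>) * z + of_real \<gamma>)) (\<lambda>n. b n * of_real ((1 - \<gamma>) ^ n))"
  unfolding admissible_def
proof (intro conjI ballI)
  have maps_to: "of_real (1 - \<gamma>) * z + of_real \<gamma> \<in> Omega 0" if "z \<in> Omega \<gamma>" for z
    using that mem_Omega_iff[OF assms(1)] mem_Omega_iff[of 0] by simp
  have "(\<lambda>z. of_real (1 - \<gamma>) * z + of_real \<gamma>) holomorphic_on Omega \<gamma>"
    by (intro holomorphic_intros)
  moreover have "(\<lambda>z. of_real (1 - \<gamma>) * z + of_real \<gamma>) ` Omega \<gamma> \<subseteq> Omega 0"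
    using maps_to by blast
  ultimately have "g \<circ> (\<lambda>z. of_real (1 - \<gamma>) * z + of_real \<gamma>) holomorphic_on Omega \<gamma>"
    using adm by (intro holomorphic_on_compose_gen) (auto simp: admissible_def)
  thus "(\<lambda>z. g (of_real (1 - \<gamma>) * z + of_real \<gamma>)) holomorphic_on Omega \<gamma>"
    by (simp add: o_def)
  fix z assume z: "z \<in> Omega \<gamma>"
  show "norm (g (of_real (1 - \<gamma>) * z + of_real \<gamma>)) \<le> 1"
    using adm maps_to[OF z] by (simp add: admissible_def)
  have "(\<lambda>n. b n * (of_real (1 - \<gamma>) * z + of_real \<gamma>) ^ n) sums g (of_real (1 - \<gamma>) * z + of_real \<gamma>)"
    using adm maps_to[OF z] by (simp add: admissible_def)
  thus "(\<lambda>n. b n * of_real ((1 - \<gamma>) ^ n) * (z + of_real (\<gamma> / (1 - \<gamma>))) ^ n)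
      sums g (of_real (1 - \<gamma>) * z + of_real \<gamma>)"
    by (simp add: affine_eq_scaled_shift[OF assms(1)] power_mult_distrib mult.assoc del: of_real_diff)
qed

definition disk_automorphism_coeff :: "real \<Rightarrow> nat \<Rightarrow> real" where
  "disk_automorphism_coeff \<alpha> n = (if n = 0 then \<alpha> else - (1 - \<alpha>\<^sup>2) * \<alpha> ^ (n - 1))"

lemma disk_automorphism_coeff_sums:
  fixes w :: complex
  assumes \<alpha>: "\<bar>\<alpha>\<bar> < 1" and w: "norm w < 1"
  shows "(\<lambda>n. of_real (disk_automorphism_coeff \<alpha> n) * w ^ n) sums ((of_real \<alpha> - w) / (1 - of_real \<alpha> * w))"
proof -
  have \<alpha>w: "norm (of_real \<alpha> * w) < 1"
    using mult_strict_mono'[OF \<alpha> w] by (simp add: norm_mult)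
  hence nz: "1 - of_real \<alpha> * w \<noteq> 0" by auto
  have "(\<lambda>n. - of_real (1 - \<alpha>\<^sup>2) * w * (of_real \<alpha> * w) ^ n)
          sums (- of_real (1 - \<alpha>\<^sup>2) * w * (1 / (1 - of_real \<alpha> * w)))"
    by (rule sums_mult[OF geometric_sums[OF \<alpha>w]])
  hence "(\<lambda>n. of_real (disk_automorphism_coeff \<alpha> (Suc n)) * w ^ Suc n)
          sums (- of_real (1 - \<alpha>\<^sup>2) * w * (1 / (1 - of_real \<alpha> * w)))"
    by (simp add: disk_automorphism_coeff_def power_mult_distrib algebra_simps)
  hence "(\<lambda>n. of_real (disk_automorphism_coeff \<alpha> n) * w ^ n)
          sums (- of_real (1 - \<alpha>\<^sup>2) * w * (1 / (1 - of_real \<alpha> * w)) + of_real \<alpha>)"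
    by (subst (asm) sums_Suc_iff) (simp add: disk_automorphism_coeff_def)
  also have "- of_real (1 - \<alpha>\<^sup>2) * w * (1 / (1 - of_real \<alpha> * w)) + of_real \<alpha>
      = (of_real \<alpha> - w) / (1 - of_real \<alpha> * w)"
    using nz by (simp add: field_simps power2_eq_square)
  finally show ?thesis .
qed

lemma admissible_0_disk_automorphism:
  assumes \<alpha>: "\<bar>\<alpha>\<bar> < 1"
  shows "admissible 0 (\<lambda>w. (of_real \<alpha> - w) / (1 - of_real \<alpha> * w))
           (\<lambda>n. of_real (disk_automorphism_coeff \<alpha> n))"
proof -
  have Omega_0: "Omega 0 = ball 0 1" by (simp add: Omega_def)
  have \<alpha>': "norm (complex_of_real \<alpha>) < 1" using \<alpha> by simp
  have Moebius: "(of_real \<alpha> - w) / (1 - of_real \<alpha> * w) = - Moebius_function 0 (of_real \<alpha>) w" for w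
    by (simp add: Moebius_function_simple minus_divide_left)
  show ?thesis
    unfolding admissible_def Omega_0 Moebius
    using Moebius_function_holomorphic[OF \<alpha>', of 0] Moebius_function_norm_lt_1[OF \<alpha>']
      disk_automorphism_coeff_sums[OF \<alpha>] Moebius
    by (auto intro: holomorphic_intros simp: less_imp_le)
qed

lemma S1_disk_automorphism_sums:
  assumes \<alpha>: "0 \<le> \<alpha>" "\<alpha> < 1" and \<rho>: "0 \<le> \<rho>" "\<rho> < 1"
  shows "S1 0 (\<lambda>n. of_real (disk_automorphism_coeff \<alpha> n)) \<rho> sums (\<alpha> + (1 - \<alpha>\<^sup>2) * \<rho> / (1 - \<alpha> * \<rho>))"
proof -
  let ?b = "\<lambda>n. complex_of_real (disk_automorphism_coeff \<alpha> n)"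
  have \<alpha>\<rho>: "norm (\<alpha> * \<rho>) < 1"
    using mult_strict_mono'[OF \<alpha>(2) \<rho>(2) \<alpha>(1) \<rho>(1)] \<alpha> \<rho> by simp
  have "S1 0 ?b \<rho> (Suc n) = (1 - \<alpha>\<^sup>2) * \<rho> * (\<alpha> * \<rho>) ^ n" for n
  proof -
    have "1 - \<alpha>\<^sup>2 \<ge> 0" using \<alpha> by (simp add: power_le_one)
    thus ?thesis
      unfolding S1_def disk_automorphism_coeff_def norm_of_real
      using \<alpha> by (simp add: abs_mult power_mult_distrib)
  qed
  hence "(\<lambda>n. S1 0 ?b \<rho> (Suc n)) sums ((1 - \<alpha>\<^sup>2) * \<rho> * (1 / (1 - \<alpha> * \<rho>)))"
    using sums_mult[OF geometric_sums[OF \<alpha>\<rho>]] by simp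
  hence "S1 0 ?b \<rho> sums ((1 - \<alpha>\<^sup>2) * \<rho> * (1 / (1 - \<alpha> * \<rho>)) + S1 0 ?b \<rho> 0)"
    by (simp only: sums_Suc_iff)
  moreover have "S1 0 ?b \<rho> 0 = \<alpha>" using \<alpha> by (simp add: S1_def disk_automorphism_coeff_def)
  ultimately show ?thesis by (simp add: add.commute)
qed

lemma suminf_S1_le_bohr_lhs:
  assumes "summable (S2 0 b \<rho>)" and "0 \<le> \<rho>" "\<rho> < 1"
  shows "(\<Sum>n. S1 0 b \<rho> n) \<le> bohr_lhs 0 b \<rho>"
proof -
  have "0 \<le> (\<Sum>n. S2 0 b \<rho> n)"
    by (rule suminf_nonneg[OF assms(1)]) (use assms(2) in \<open>simp add: S2_def\<close>)
  moreover have "0 \<le> 1 / (1 + norm (b 0)) + \<rho> / (1 - \<rho>)" using assms(2,3) by simp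
  ultimately show ?thesis by (simp add: bohr_lhs_def)
qed

lemma bohr_lhs_gt_1_beyond_one_third:
  assumes \<rho>: "1/3 < \<rho>" "\<rho> < 1"
  shows "\<exists>g b. admissible 0 g b \<and> summable (S1 0 b \<rho>) \<and> summable (S2 0 b \<rho>) \<and> 1 < bohr_lhs 0 b \<rho>"
proof -
  txt \<open>The first sum is \<open>\<alpha> + (1 - \<alpha>\<^sup>2) \<rho> / (1 - \<alpha> \<rho>)\<close>, which exceeds 1 iff
    \<open>\<rho> (1 + 2 \<alpha>) > 1\<close>; take \<open>\<alpha>\<close> midway between \<open>(1/\<rho> - 1)/2\<close> and 1.\<close>
  define \<alpha> where "\<alpha> = (1 / \<rho> + 1) / 4"
  have \<alpha>: "0 \<le> \<alpha>" "\<alpha> < 1" and key: "1 < \<rho> * (1 + 2 * \<alpha>)"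
    using \<rho> by (auto simp: \<alpha>_def field_simps)
  let ?g = "\<lambda>w. (of_real \<alpha> - w) / (1 - of_real \<alpha> * w)"
  let ?b = "\<lambda>n. complex_of_real (disk_automorphism_coeff \<alpha> n)"
  have adm: "admissible 0 ?g ?b" using admissible_0_disk_automorphism \<alpha> by simp
  hence schur: "schur_coeffs ?b" using admissible_imp_schur_coeffs[of 0] by simp
  have \<rho>0: "0 \<le> \<rho>" using \<rho> by simp
  have S1: "S1 0 ?b \<rho> sums (\<alpha> + (1 - \<alpha>\<^sup>2) * \<rho> / (1 - \<alpha> * \<rho>))"
    by (rule S1_disk_automorphism_sums[OF \<alpha> \<rho>0 \<rho>(2)])
  have S2: "summable (S2 0 ?b \<rho>)"
    by (rule schur_coeffs_S2_bound(1)[OF schur \<rho>0 \<rho>(2)])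
  have "(1 - \<alpha>\<^sup>2) * \<rho> - (1 - \<alpha>) * (1 - \<alpha> * \<rho>) = (1 - \<alpha>) * (\<rho> * (1 + 2 * \<alpha>) - 1)"
    by (simp add: algebra_simps power2_eq_square)
  also have "\<dots> > 0" using \<alpha> key by simp
  finally have "(1 - \<alpha>) * (1 - \<alpha> * \<rho>) < (1 - \<alpha>\<^sup>2) * \<rho>" by simp
  moreover have "1 - \<alpha> * \<rho> > 0" using \<alpha> \<rho> mult_strict_mono'[OF \<alpha>(2) \<rho>(2) \<alpha>(1) \<rho>0] by simp
  ultimately have "1 - \<alpha> < (1 - \<alpha>\<^sup>2) * \<rho> / (1 - \<alpha> * \<rho>)"
    by (simp add: pos_less_divide_eq)
  hence "1 < \<alpha> + (1 - \<alpha>\<^sup>2) * \<rho> / (1 - \<alpha> * \<rho>)" by simp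
  also have "\<dots> \<le> bohr_lhs 0 ?b \<rho>"
    using suminf_S1_le_bohr_lhs[OF S2 \<rho>0 \<rho>(2)] by (simp add: sums_unique[OF S1])
  finally show ?thesis
    using adm sums_summable[OF S1] S2 by blast
qed

theorem theorem2p1:
  fixes \<gamma> :: real
  assumes "0 \<le> \<gamma>" and "\<gamma> < 1"
  shows "(\<forall>f a (z::complex). admissible \<gamma> f a \<and> norm (complex_of_real (1 - \<gamma>) * z + complex_of_real \<gamma>) \<le> 1/3 \<longrightarrow>
            (let \<rho> = norm (complex_of_real (1 - \<gamma>) * z + complex_of_real \<gamma>) in
              summable (S1 \<gamma> a \<rho>) \<and> summable (S2 \<gamma> a \<rho>) \<and> bohr_lhs \<gamma> a \<rho> \<le> 1))
       \<and> (\<forall>\<rho>. 1/3 < \<rho> \<and> \<rho> < 1 \<longrightarrow>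
            (\<exists>f a. admissible \<gamma> f a \<and> summable (S1 \<gamma> a \<rho>) \<and> summable (S2 \<gamma> a \<rho>)
                   \<and> bohr_lhs \<gamma> a \<rho> > 1))"
proof (intro conjI allI impI)
  fix f a and z :: complex
  let ?\<rho> = "norm (of_real (1 - \<gamma>) * z + of_real \<gamma>)"
  assume H: "admissible \<gamma> f a \<and> ?\<rho> \<le> 1/3"
  let ?b = "\<lambda>n. a n / of_real ((1 - \<gamma>) ^ n)"
  have "schur_coeffs ?b" using H admissible_imp_schur_coeffs[OF assms(2)] by blast
  hence "summable (S1 0 ?b ?\<rho>) \<and> summable (S2 0 ?b ?\<rho>) \<and> bohr_lhs 0 ?b ?\<rho> \<le> 1"
    using H by (intro schur_coeffs_bohr_inequality) auto
  thus "let \<rho> = ?\<rho> in summable (S1 \<gamma> a \<rho>) \<and> summable (S2 \<gamma> a \<rho>) \<and> bohr_lhs \<gamma> a \<rho> \<le> 1"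
    by (simp only: Let_def S1_rescale[OF assms(2)] S2_rescale[OF assms(2)] bohr_lhs_rescale[OF assms(2)])
next
  fix \<rho> :: real assume "1/3 < \<rho> \<and> \<rho> < 1"
  then obtain g b where "admissible 0 g b" "summable (S1 0 b \<rho>)" "summable (S2 0 b \<rho>)" "1 < bohr_lhs 0 b \<rho>"
    using bohr_lhs_gt_1_beyond_one_third by blast
  moreover have "(\<lambda>n. b n * of_real ((1 - \<gamma>) ^ n) / of_real ((1 - \<gamma>) ^ n)) = b"
    using assms(2) by (simp add: fun_eq_iff)
  ultimately show "\<exists>f a. admissible \<gamma> f a \<and> summable (S1 \<gamma> a \<rho>) \<and> summable (S2 \<gamma> a \<rho>) \<and> 1 < bohr_lhs \<gamma> a \<rho>"
    using admissible_compose_affine[OF assms(2)]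
    by (metis S1_rescale[OF assms(2)] S2_rescale[OF assms(2)] bohr_lhs_rescale[OF assms(2)])
qed

end
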